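(* Let $X$ be a robust $X$-set parameter and let $G$ be a graph. If $X(K_1)=0$ or $G$ has no isolated vertices, then the automorphism group of $\mathfrak{X}(G)$ is generated by $\{\nu_R: R\subseteq V(G)\text{ is } X\text{-irrelevant}\}\cup M_X(G)$, where each $\psi\in M_X(G)$ acts on $\mathfrak{X}(G)$ by $S\mapsto\psi(S)$.
   Context: All graphs are finite, simple, undirected, with nonempty vertex set. A super $X$-set parameter $X$ assigns to each graph $G$ a family of subsets of $V(G)$, called the $X$-sets of $G$, such that: every graph isomorphism maps $X$-sets to $X$-sets; every graph has at least one $X$-set; and (Superset) if $S$ is an $X$-set of $G$ and $S\subseteq S'\subseteq V(G)$, then $S'$ is an $X$-set of $G$. $X(G)$ is the minimum cardinality of an $X$-set. A robust $X$-set parameter is a super $X$-set parameter that additionally satisfies: ($(n-1)$-set) if $G$ is connected of order $n\ge2$, every set of $n-1$ vertices is an $X$-set; (Component consistency) if $G_1,\dots,G_k$ are the connected components of $G$, then $S\subseteq V(G)$ is an $X$-set of $G$ iff $S\cap V(G_i)$ is an $X$-set of $G_i$ for all $i$. The $X$-TAR graph $\mathfrak{X}(G)$ has as vertices the $X$-sets of $G$, with $S_1S_2$ an edge iff $|S_1\ominus S_2|=1$. A vertex is $X$-irrelevant if it lies in no minimal (w.r.t. inclusion) $X$-set; a set is $X$-irrelevant if all its vertices are. For $R\subseteq V(G)$, $\nu_R(S)=S\ominus R$ (symmetric difference). $M_X(G)$ is the set of bijections $\psi:V(G)\to V(G)$ that send minimal $X$-sets of $G$ to minimal $X$-sets of $G$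 of the same size. *)

theory Defs
  imports Main "HOL-Algebra.Bij" "HOL-Algebra.Generated_Groups"
begin

text \<open>Graphs: vertex set (finite, nonempty, subset of nat) and edges as 2-element subsets.
  Every finite simple graph is isomorphic to one of these.\<close>
type_synonym graph = "nat set \<times> nat set set"

definition verts :: "graph \<Rightarrow> nat set" where "verts G = fst G"
definition edges :: "graph \<Rightarrow> nat set set" where "edges G = snd G"

definition is_graph :: "graph \<Rightarrow> bool" where
  "is_graph G \<longleftrightarrow> finite (verts G) \<and> verts G \<noteq> {} \<and>
     (\<forall>e\<in>edges G. e \<subseteq> verts G \<and> card e = 2)"

definition graph_iso :: "(nat \<Rightarrow> nat) \<Rightarrow> graph \<Rightarrow> graph \<Rightarrow> bool" where
  "graph_iso f G H \<longleftrightarrow> bij_betw f (verts G) (verts H) \<and>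
     (\<forall>x\<in>verts G. \<forall>y\<in>verts G. ({x,y} \<in> edges G \<longleftrightarrow> {f x, f y} \<in> edges H))"

definition adj_rel :: "graph \<Rightarrow> (nat \<times> nat) set" where
  "adj_rel G = {(x,y). {x,y} \<in> edges G}"

definition connected_graph :: "graph \<Rightarrow> bool" where
  "connected_graph G \<longleftrightarrow> (\<forall>x\<in>verts G. \<forall>y\<in>verts G. (x,y) \<in> (adj_rel G)\<^sup>*)"

definition component_of :: "graph \<Rightarrow> nat \<Rightarrow> nat set" where
  "component_of G v = {u. (v,u) \<in> (adj_rel G)\<^sup>*}"

definition components :: "graph \<Rightarrow> nat set set" where
  "components G = component_of G ` verts G"

definition induced :: "graph \<Rightarrow> nat set \<Rightarrow> graph" where
  "induced G C = (C, {e\<in>edges G. e \<subseteq> C})"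

definition isolated :: "graph \<Rightarrow> nat \<Rightarrow> bool" where
  "isolated G v \<longleftrightarrow> v \<in> verts G \<and> (\<forall>e\<in>edges G. v \<notin> e)"

definition K1 :: graph where "K1 = ({0}, {})"

definition super_X_param :: "(graph \<Rightarrow> nat set set) \<Rightarrow> bool" where
  "super_X_param X \<longleftrightarrow>
     (\<forall>G. is_graph G \<longrightarrow> (\<forall>S\<in>X G. S \<subseteq> verts G)) \<and>
     (\<forall>G H f S. is_graph G \<and> is_graph H \<and> graph_iso f G H \<and> S \<in> X G \<longrightarrow> f ` S \<in> X H) \<and>
     (\<forall>G. is_graph G \<longrightarrow> X G \<noteq> {}) \<and>
     (\<forall>G S S'. is_graph G \<and> S \<in> X G \<and> S \<subseteq> S' \<and> S' \<subseteq> verts G \<longrightarrow> S' \<in> X G)"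

definition robust_X_param :: "(graph \<Rightarrow> nat set set) \<Rightarrow> bool" where
  "robust_X_param X \<longleftrightarrow> super_X_param X \<and>
     (\<forall>G S. is_graph G \<and> connected_graph G \<and> card (verts G) \<ge> 2 \<and> S \<subseteq> verts G \<and>
            card S = card (verts G) - 1 \<longrightarrow> S \<in> X G) \<and>
     (\<forall>G S. is_graph G \<and> S \<subseteq> verts G \<longrightarrow>
            (S \<in> X G \<longleftrightarrow> (\<forall>C\<in>components G. S \<inter> C \<in> X (induced G C))))"

definition Xnum :: "(graph \<Rightarrow> nat set set) \<Rightarrow> graph \<Rightarrow> nat" where
  "Xnum X G = Min (card ` X G)"

definition minimal_Xset :: "(graph \<Rightarrow> nat set set) \<Rightarrow> graph \<Rightarrow> nat set \<Rightarrow> bool" where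
  "minimal_Xset X G S \<longleftrightarrow> S \<in> X G \<and> (\<forall>T\<in>X G. T \<subseteq> S \<longrightarrow> T = S)"

definition X_irrelevant :: "(graph \<Rightarrow> nat set set) \<Rightarrow> graph \<Rightarrow> nat set \<Rightarrow> bool" where
  "X_irrelevant X G R \<longleftrightarrow> R \<subseteq> verts G \<and> (\<forall>v\<in>R. \<forall>S. minimal_Xset X G S \<longrightarrow> v \<notin> S)"

definition tar_adj :: "nat set \<Rightarrow> nat set \<Rightarrow> bool" where
  "tar_adj S1 S2 \<longleftrightarrow> card ((S1 - S2) \<union> (S2 - S1)) = 1"

text \<open>Automorphisms of the X-TAR graph, as (extensional) permutations of its vertex set X G.\<close>
definition tar_aut :: "(graph \<Rightarrow> nat set set) \<Rightarrow> graph \<Rightarrow> (nat set \<Rightarrow> nat set) set" where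
  "tar_aut X G = {f \<in> Bij (X G). \<forall>S1\<in>X G. \<forall>S2\<in>X G. tar_adj S1 S2 \<longleftrightarrow> tar_adj (f S1) (f S2)}"

definition nu :: "nat set \<Rightarrow> nat set \<Rightarrow> nat set" where
  "nu R S = (S - R) \<union> (R - S)"

definition M_X :: "(graph \<Rightarrow> nat set set) \<Rightarrow> graph \<Rightarrow> (nat \<Rightarrow> nat) set" where
  "M_X X G = {\<psi>. bij_betw \<psi> (verts G) (verts G) \<and>
     (\<forall>S. minimal_Xset X G S \<longrightarrow> minimal_Xset X G (\<psi> ` S) \<and> card (\<psi> ` S) = card S)}"

definition tar_generators :: "(graph \<Rightarrow> nat set set) \<Rightarrow> graph \<Rightarrow> (nat set \<Rightarrow> nat set) set" where
  "tar_generators X G =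
     {restrict (nu R) (X G) | R. X_irrelevant X G R} \<union>
     {restrict (\<lambda>S. \<psi> ` S) (X G) | \<psi>. \<psi> \<in> M_X X G}"

end

theory Submission
  imports Defs
begin

text \<open>An automorphism \<open>f\<close> of the TAR graph sends the edge from \<open>V - {v}\<close> to \<open>V\<close> to an
  edge flipping a single element \<open>p v\<close>. A 4-cycle of four distinct sets in the TAR graph is a
  square of the hypercube, whose opposite edges flip the same element; chasing squares shows that
  \<open>f\<close> flips \<open>p v\<close> along every edge in direction \<open>v\<close>. Hence \<open>p\<close> is a permutation of \<open>V\<close>
  and \<open>f S = p (R \<ominus> S)\<close> with \<open>p R = V - f V\<close>. As \<open>f\<close> maps X-sets onto X-sets, deleting a
  vertex of \<open>R\<close> from a minimal X-set would leave an X-set, so \<open>R\<close> is X-irrelevant; then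
  \<open>\<nu>\<^sub>R\<close> preserves X-sets, hence so does \<open>p\<close>, i.e. \<open>p \<in> M\<^sub>X(G)\<close>, and
  \<open>f = p \<circ> \<nu>\<^sub>R\<close>. All this needs only that the X-sets are closed upwards and contain every
  \<open>V - {v}\<close>, which for a robust parameter follows from component consistency.\<close>

section \<open>Symmetric differences\<close>

lemma nu_comm: "nu A B = nu B A"
  by (auto simp: nu_def)

lemma nu_nu_cancel [simp]: "nu A (nu A B) = B" "nu (nu A B) B = A"
  by (auto simp: nu_def)

lemma nu_nu_left: "nu (nu R A) (nu R B) = nu A B"
  by (auto simp: nu_def)

lemma tar_adj_iff_card_nu: "tar_adj A B \<longleftrightarrow> card (nu A B) = 1"
  unfolding tar_adj_def nu_def[symmetric] by (simp add: nu_comm)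

lemma tar_adj_iff_nu_singleton: "tar_adj A B \<longleftrightarrow> (\<exists>x. nu A B = {x})"
  by (simp add: tar_adj_iff_card_nu card_1_singleton_iff)

lemma image_nu:
  assumes "inj_on h C" "A \<subseteq> C" "B \<subseteq> C"
  shows "h ` nu A B = nu (h ` A) (h ` B)"
proof -
  have "h ` (A - B) = h ` A - h ` B" "h ` (B - A) = h ` B - h ` A"
    using assms by (meson Diff_subset inj_on_image_set_diff order_trans)+
  then show ?thesis
    unfolding nu_def image_Un by simp
qed

lemma nu_Diff_Diff: "A \<subseteq> V \<Longrightarrow> B \<subseteq> V \<Longrightarrow> nu A (V - B) = nu (V - A) B"
  by (auto simp: nu_def)

lemma inj_on_image_subset_iff:
  assumes "inj_on h C" "A \<subseteq> C" "B \<subseteq> C"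
  shows "h ` A \<subseteq> h ` B \<longleftrightarrow> A \<subseteq> B"
  using assms by (auto simp: inj_on_image_mem_iff subset_eq)

text \<open>In the TAR graph of all subsets, a 4-cycle through four distinct sets is a square of the
  hypercube, so its opposite edges flip the same element.\<close>
lemma nu_singleton_square:
  assumes "nu a b = {x}" "nu b c = {p}" "nu c d = {y}" "nu d a = {z}" "a \<noteq> c" "b \<noteq> d"
  shows "z = p"
  using assms unfolding nu_def set_eq_iff by (metis Diff_iff Un_iff insert_iff empty_iff)

section \<open>Automorphisms of the TAR graph of an upward closed family\<close>

locale cosingleton_closed_Xsets =
  fixes X :: "graph \<Rightarrow> nat set set" and G :: graph
  assumes finite_verts: "finite (verts G)"
    and Xset_subset: "S \<in> X G \<Longrightarrow> S \<subseteq> verts G"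
    and Xset_superset: "S \<in> X G \<Longrightarrow> S \<subseteq> T \<Longrightarrow> T \<subseteq> verts G \<Longrightarrow> T \<in> X G"
    and cosingleton_Xset: "v \<in> verts G \<Longrightarrow> verts G - {v} \<in> X G"
    and Xsets_nonempty: "X G \<noteq> {}"
begin

abbreviation "V \<equiv> verts G"
abbreviation "F \<equiv> X G"

lemma verts_Xset: "V \<in> F"
  using Xsets_nonempty Xset_superset Xset_subset by blast

lemma tar_aut_subgroup: "subgroup (tar_aut X G) (BijGroup F)"
proof (rule group.subgroupI[OF group_BijGroup])
  show "tar_aut X G \<subseteq> carrier (BijGroup F)"
    by (auto simp: tar_aut_def BijGroup_def)
  have "(\<lambda>S \<in> F. S) \<in> tar_aut X G"
    by (simp add: tar_aut_def id_Bij)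
  then show "tar_aut X G \<noteq> {}"
    by blast
next
  fix f g assume f: "f \<in> tar_aut X G" and g: "g \<in> tar_aut X G"
  then have fB: "f \<in> Bij F" and gB: "g \<in> Bij F" and gF: "\<And>S. S \<in> F \<Longrightarrow> g S \<in> F"
    by (auto simp: tar_aut_def Bij_def bij_betw_apply)
  have "compose F f g \<in> tar_aut X G"
    using f g gF compose_Bij[OF fB gB] unfolding tar_aut_def compose_def by auto
  with fB gB show "f \<otimes>\<^bsub>BijGroup F\<^esub> g \<in> tar_aut X G"
    by (simp add: BijGroup_def)
next
  fix f assume f: "f \<in> tar_aut X G"
  then have fB: "f \<in> Bij F" and bij: "bij_betw f F F"
    by (auto simp: tar_aut_def Bij_def)
  have "tar_adj (inv_into F f A) (inv_into F f B) \<longleftrightarrow> tar_adj A B" if "A \<in> F" "B \<in> F" for A B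
  proof -
    have "inv_into F f A \<in> F" "inv_into F f B \<in> F"
      using that bij_betw_apply[OF bij_betw_inv_into[OF bij]] by auto
    with f have "tar_adj (inv_into F f A) (inv_into F f B)
        \<longleftrightarrow> tar_adj (f (inv_into F f A)) (f (inv_into F f B))"
      by (simp add: tar_aut_def)
    with that bij show ?thesis
      by (simp add: bij_betw_inv_into_right)
  qed
  then show "inv\<^bsub>BijGroup F\<^esub> f \<in> tar_aut X G"
    by (simp add: inv_BijGroup[OF fB] tar_aut_def restrict_inv_into_Bij[OF fB])
qed

lemma tar_aut_Xset: "f \<in> tar_aut X G \<Longrightarrow> S \<in> F \<Longrightarrow> f S \<in> F"
  by (auto simp: tar_aut_def Bij_def bij_betw_apply)

lemma tar_aut_inj_on: "f \<in> tar_aut X G \<Longrightarrow> inj_on f F"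
  by (simp add: tar_aut_def Bij_def bij_betw_def)

lemma restrict_in_tar_aut:
  assumes bij: "bij_betw h (Pow V) (Pow V)"
    and Xsets: "\<And>S. S \<subseteq> V \<Longrightarrow> h S \<in> F \<longleftrightarrow> S \<in> F"
    and adj: "\<And>A B. A \<subseteq> V \<Longrightarrow> B \<subseteq> V \<Longrightarrow> tar_adj (h A) (h B) \<longleftrightarrow> tar_adj A B"
  shows "restrict h F \<in> tar_aut X G"
proof -
  have F_Pow: "F \<subseteq> Pow V"
    using Xset_subset by blast
  have "h ` F = F"
  proof
    show "h ` F \<subseteq> F"
      using F_Pow Xsets by blast
    show "F \<subseteq> h ` F"
    proof
      fix T assume T: "T \<in> F"
      then obtain S where "S \<subseteq> V" "T = h S"
        using F_Pow bij by (metis PowD bij_betw_imp_surj_on imageE subsetD)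
      with T Xsets show "T \<in> h ` F" by blast
    qed
  qed
  then have "bij_betw h F F"
    using bij_betw_subset[OF bij F_Pow] by blast
  moreover have "tar_adj A B \<longleftrightarrow> tar_adj (h A) (h B)" if "A \<in> F" "B \<in> F" for A B
    using adj that Xset_subset by simp
  ultimately show ?thesis
    by (simp add: tar_aut_def Bij_def bij_betw_restrict_eq)
qed

lemma ex_minimal_Xset_subset:
  assumes "S \<in> F"
  obtains M where "minimal_Xset X G M" "M \<subseteq> S"
proof -
  have "finite {T \<in> F. T \<subseteq> S}"
    using Xset_subset finite_verts by (auto intro: finite_subset[of _ "Pow V"])
  then obtain M where "M \<in> {T \<in> F. T \<subseteq> S}" "\<forall>T \<in> {T \<in> F. T \<subseteq> S}. T \<subseteq> M \<longrightarrow> M = T"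
    using finite_has_minimal[of "{T \<in> F. T \<subseteq> S}"] assms by blast
  then show thesis
    using that unfolding minimal_Xset_def by (metis (no_types, lifting) mem_Collect_eq order_trans)
qed

lemma nu_irrelevant_Xset_iff:
  assumes R: "X_irrelevant X G R"
  shows "nu R S \<in> F \<longleftrightarrow> S \<in> F"
proof -
  have nu_Xset: "nu R T \<in> F" if T: "T \<in> F" for T
  proof -
    obtain M where M: "minimal_Xset X G M" "M \<subseteq> T"
      using ex_minimal_Xset_subset[OF T] .
    have "M \<inter> R = {}"
      using R M(1) unfolding X_irrelevant_def by blast
    then have "M \<subseteq> nu R T"
      using M(2) unfolding nu_def by blast
    moreover have "nu R T \<subseteq> V"
      using R Xset_subset[OF T] unfolding X_irrelevant_def nu_def by blast
    moreover have "M \<in> F"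
      using M(1) by (simp add: minimal_Xset_def)
    ultimately show ?thesis
      using Xset_superset by blast
  qed
  show ?thesis
    using nu_Xset[of S] nu_Xset[of "nu R S"] by (metis nu_nu_cancel(1))
qed

lemma nu_irrelevant_in_tar_aut:
  assumes R: "X_irrelevant X G R"
  shows "restrict (nu R) F \<in> tar_aut X G"
proof (rule restrict_in_tar_aut)
  have "R \<subseteq> V"
    using R by (simp add: X_irrelevant_def)
  then have "nu R ` Pow V \<subseteq> Pow V"
    by (auto simp: nu_def)
  then show "bij_betw (nu R) (Pow V) (Pow V)"
    by (intro bij_betw_byWitness[where f' = "nu R"]) auto
qed (simp_all add: nu_irrelevant_Xset_iff[OF R] tar_adj_iff_card_nu nu_nu_left)

lemma M_X_image_Xset_iff:
  assumes \<psi>: "\<psi> \<in> M_X X G" and S: "S \<subseteq> V"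
  shows "\<psi> ` S \<in> F \<longleftrightarrow> S \<in> F"
proof
  have inj: "inj_on \<psi> V" and im: "\<psi> ` V = V"
    using \<psi> by (auto simp: M_X_def bij_betw_def)
  define Mins where "Mins = {M. minimal_Xset X G M}"
  have Mins_Pow: "Mins \<subseteq> Pow V"
    using Xset_subset by (auto simp: Mins_def minimal_Xset_def)
  have "(`) \<psi> ` Mins \<subseteq> Mins"
    using \<psi> by (auto simp: M_X_def Mins_def)
  moreover have "inj_on ((`) \<psi>) Mins"
    using Mins_Pow inj by (intro inj_onI) (metis PowD inj_on_image_eq_iff subsetD)
  moreover have "finite Mins"
    using Mins_Pow finite_verts finite_subset by blast
  ultimately have Mins_onto: "(`) \<psi> ` Mins = Mins"
    using endo_inj_surj by blast
  assume "\<psi> ` S \<in> F"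
  then obtain M' where M': "minimal_Xset X G M'" "M' \<subseteq> \<psi> ` S"
    using ex_minimal_Xset_subset by blast
  then have "M' \<in> (`) \<psi> ` Mins"
    using Mins_onto by (simp add: Mins_def)
  then obtain M where M: "minimal_Xset X G M" "M' = \<psi> ` M"
    by (auto simp: Mins_def)
  moreover have "M \<subseteq> V"
    using M(1) Xset_subset by (simp add: minimal_Xset_def)
  ultimately have "M \<subseteq> S"
    using M'(2) inj S by (simp add: inj_on_image_subset_iff)
  with M(1) S show "S \<in> F"
    using Xset_superset by (auto simp: minimal_Xset_def)
next
  assume "S \<in> F"
  then obtain M where M: "minimal_Xset X G M" "M \<subseteq> S"
    using ex_minimal_Xset_subset by blast
  then have "\<psi> ` M \<in> F"
    using \<psi> by (simp add: M_X_def minimal_Xset_def)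
  moreover have "\<psi> ` S \<subseteq> V"
    using \<psi> S by (auto simp: M_X_def bij_betw_def)
  ultimately show "\<psi> ` S \<in> F"
    using M(2) Xset_superset by (meson image_mono)
qed

lemma M_X_if_image_Xset_iff:
  assumes bij: "bij_betw \<psi> V V" and Xsets: "\<And>S. S \<subseteq> V \<Longrightarrow> \<psi> ` S \<in> F \<longleftrightarrow> S \<in> F"
  shows "\<psi> \<in> M_X X G"
  unfolding M_X_def
proof (intro CollectI conjI allI impI bij)
  have inj: "inj_on \<psi> V"
    using bij by (simp add: bij_betw_def)
  fix M assume M: "minimal_Xset X G M"
  then have MF: "M \<in> F" and MV: "M \<subseteq> V"
    using Xset_subset by (auto simp: minimal_Xset_def)
  show "card (\<psi> ` M) = card M"
    using card_image inj MV inj_on_subset by blast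
  show "minimal_Xset X G (\<psi> ` M)"
    unfolding minimal_Xset_def
  proof (intro conjI ballI impI)
    show "\<psi> ` M \<in> F"
      using Xsets MF MV by blast
    fix T assume T: "T \<in> F" "T \<subseteq> \<psi> ` M"
    then obtain S where S: "S \<subseteq> M" "T = \<psi> ` S"
      by (auto simp: subset_image_iff)
    then have "S \<in> F"
      using Xsets T(1) MV by blast
    then show "T = \<psi> ` M"
      using M S unfolding minimal_Xset_def by blast
  qed
qed

lemma image_in_tar_aut:
  assumes bij: "bij_betw \<psi> V V" and Xsets: "\<And>S. S \<subseteq> V \<Longrightarrow> \<psi> ` S \<in> F \<longleftrightarrow> S \<in> F"
  shows "restrict ((`) \<psi>) F \<in> tar_aut X G"
proof (rule restrict_in_tar_aut[OF bij_betw_Pow[OF bij] Xsets])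
  fix A B assume AB: "A \<subseteq> V" "B \<subseteq> V"
  have inj: "inj_on \<psi> V"
    using bij by (simp add: bij_betw_def)
  then have "nu (\<psi> ` A) (\<psi> ` B) = \<psi> ` nu A B"
    using AB by (simp add: image_nu)
  moreover have "inj_on \<psi> (nu A B)"
    using AB by (intro inj_on_subset[OF inj]) (auto simp: nu_def)
  ultimately have "card (nu (\<psi> ` A) (\<psi> ` B)) = card (nu A B)"
    by (simp add: card_image)
  then show "tar_adj (\<psi> ` A) (\<psi> ` B) \<longleftrightarrow> tar_adj A B"
    by (simp add: tar_adj_iff_card_nu)
qed

lemma tar_generators_subset: "tar_generators X G \<subseteq> tar_aut X G"
proof -
  have "restrict ((`) \<psi>) F \<in> tar_aut X G" if "\<psi> \<in> M_X X G" for \<psi>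
    using that image_in_tar_aut M_X_image_Xset_iff by (simp add: M_X_def)
  then show ?thesis
    unfolding tar_generators_def using nu_irrelevant_in_tar_aut by blast
qed

lemma tar_aut_nu_singleton:
  assumes "f \<in> tar_aut X G" "A \<in> F" "B \<in> F" "nu A B = {x}"
  obtains y where "nu (f A) (f B) = {y}"
proof -
  have "tar_adj A B"
    using assms(4) by (simp add: tar_adj_iff_nu_singleton)
  then have "tar_adj (f A) (f B)"
    using assms(1-3) by (simp add: tar_aut_def)
  then show thesis
    using that by (auto simp: tar_adj_iff_nu_singleton)
qed

definition edge_label :: "(nat set \<Rightarrow> nat set) \<Rightarrow> nat \<Rightarrow> nat" where
  "edge_label f v = (THE x. nu (f (V - {v})) (f V) = {x})"

text \<open>The edges of the hypercube in direction \<open>v\<close> inside the X-sets are linked to the edge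
  from \<open>V - {v}\<close> to \<open>V\<close> by a ladder of squares, so all of them receive the same label.\<close>
lemma tar_aut_edge_label:
  assumes f: "f \<in> tar_aut X G" and D: "D \<subseteq> V" and v: "v \<in> V - D"
    and Xset: "V - insert v D \<in> F"
  shows "nu (f (V - insert v D)) (f (V - D)) = {edge_label f v}"
  using finite_subset[OF D finite_verts] D v Xset
proof (induction D rule: finite_induct)
  case empty
  then have "nu (V - {v}) V = {v}"
    by (auto simp: nu_def)
  then obtain y where "nu (f (V - {v})) (f V) = {y}"
    using tar_aut_nu_singleton[OF f cosingleton_Xset verts_Xset] empty.prems by blast
  then show ?case
    by (simp add: edge_label_def)
next
  case (insert w D)
  let ?S = "V - insert v (insert w D)"
  have w: "w \<in> V" "w \<noteq> v" "w \<notin> D"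
    using insert by auto
  have Xsets: "V - insert v D \<in> F" "V - D \<in> F" "V - insert w D \<in> F"
    by (rule Xset_superset[OF insert.prems(3)]; blast)+
  have IH: "nu (f (V - insert v D)) (f (V - D)) = {edge_label f v}"
    using insert.IH insert.prems Xsets by auto
  have "nu ?S (V - insert v D) = {w}" "nu (V - D) (V - insert w D) = {w}"
      "nu (V - insert w D) ?S = {v}"
    using w insert.prems by (auto simp: nu_def)
  then obtain x y z where
    "nu (f ?S) (f (V - insert v D)) = {x}" "nu (f (V - D)) (f (V - insert w D)) = {y}"
    and z: "nu (f (V - insert w D)) (f ?S) = {z}"
    using tar_aut_nu_singleton[OF f] insert.prems(3) Xsets by metis
  moreover have "f ?S \<noteq> f (V - D)" "f (V - insert v D) \<noteq> f (V - insert w D)"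
    using inj_onD[OF tar_aut_inj_on[OF f]] insert.prems(3) Xsets w insert.prems(2) by blast+
  ultimately have "z = edge_label f v"
    using IH by (intro nu_singleton_square)
  with z show ?case
    by (simp add: nu_comm)
qed

lemma tar_aut_cosingleton_edge:
  "f \<in> tar_aut X G \<Longrightarrow> v \<in> V \<Longrightarrow> nu (f (V - {v})) (f V) = {edge_label f v}"
  using tar_aut_edge_label[of f "{}" v] cosingleton_Xset by simp

lemma edge_label_in_verts:
  assumes f: "f \<in> tar_aut X G" and v: "v \<in> V"
  shows "edge_label f v \<in> V"
proof -
  have "f (V - {v}) \<subseteq> V" "f V \<subseteq> V"
    using Xset_subset tar_aut_Xset[OF f] cosingleton_Xset[OF v] verts_Xset by auto
  then have "nu (f (V - {v})) (f V) \<subseteq> V"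
    by (auto simp: nu_def)
  then show ?thesis
    using tar_aut_cosingleton_edge[OF f v] by simp
qed

lemma edge_label_bij:
  assumes f: "f \<in> tar_aut X G"
  shows "bij_betw (edge_label f) V V"
proof -
  have cosingleton_image: "f (V - {v}) = nu {edge_label f v} (f V)" if "v \<in> V" for v
    using tar_aut_cosingleton_edge[OF f that] nu_nu_cancel(2)[of "f (V - {v})" "f V"] by simp
  have "inj_on (edge_label f) V"
  proof (rule inj_onI)
    fix v w assume vw: "v \<in> V" "w \<in> V" "edge_label f v = edge_label f w"
    then have "f (V - {v}) = f (V - {w})"
      by (simp add: cosingleton_image)
    then have "V - {v} = V - {w}"
      using inj_onD[OF tar_aut_inj_on[OF f]] cosingleton_Xset vw by blast
    with vw show "v = w"
      by blast
  qed
  moreover have "edge_label f ` V \<subseteq> V"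
    using edge_label_in_verts[OF f] by blast
  ultimately show ?thesis
    using endo_inj_surj[OF finite_verts] by (simp add: bij_betw_def)
qed

lemma tar_aut_eq_nu_label_image:
  assumes f: "f \<in> tar_aut X G" and S: "S \<in> F"
  shows "f S = nu (f V) (edge_label f ` (V - S))"
proof -
  let ?p = "edge_label f"
  have inj: "inj_on ?p V"
    using edge_label_bij[OF f] by (simp add: bij_betw_def)
  have "V - D \<in> F \<longrightarrow> f (V - D) = nu (f V) (?p ` D)" if D: "D \<subseteq> V" for D
    using finite_subset[OF D finite_verts] D
  proof (induction D rule: finite_subset_induct')
    case empty
    show ?case by (simp add: nu_def)
  next
    case (insert w D)
    show ?case
    proof
      assume Xset: "V - insert w D \<in> F"
      then have "V - D \<in> F"
        using Xset_superset by blast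
      then have IH: "f (V - D) = nu (f V) (?p ` D)"
        using insert.IH by blast
      have "nu (f (V - insert w D)) (f (V - D)) = {?p w}"
        using tar_aut_edge_label[OF f _ _ Xset] insert by blast
      then have "f (V - insert w D) = nu {?p w} (f (V - D))"
        using nu_nu_cancel(2)[of "f (V - insert w D)" "f (V - D)"] by simp
      also have "\<dots> = nu (f V) (nu {?p w} (?p ` D))"
        unfolding IH by (auto simp: nu_def)
      also have "nu {?p w} (?p ` D) = ?p ` insert w D"
        using inj insert by (auto simp: nu_def inj_on_image_mem_iff)
      finally show "f (V - insert w D) = nu (f V) (?p ` insert w D)" .
    qed
  qed
  moreover have "V - (V - S) = S"
    using Xset_subset[OF S] by blast
  ultimately show ?thesis
    using S by (metis Diff_subset)
qed

lemma tar_aut_eq_image_nu: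
  assumes f: "f \<in> tar_aut X G"
  obtains p R where "bij_betw p V V" "R \<subseteq> V" "\<And>S. S \<in> F \<Longrightarrow> f S = p ` nu R S"
proof -
  let ?p = "edge_label f"
  define R where "R = {v \<in> V. ?p v \<notin> f V}"
  have R_V: "R \<subseteq> V"
    by (simp add: R_def)
  have bij: "bij_betw ?p V V"
    using edge_label_bij[OF f] .
  then have inj: "inj_on ?p V" and im: "?p ` V = V"
    by (auto simp: bij_betw_def)
  have fV: "f V \<subseteq> V"
    using Xset_subset tar_aut_Xset[OF f verts_Xset] by blast
  have pR: "?p ` R = V - f V"
  proof
    show "?p ` R \<subseteq> V - f V"
      using im by (auto simp: R_def)
    show "V - f V \<subseteq> ?p ` R"
    proof
      fix x assume x: "x \<in> V - f V"
      then obtain v where "v \<in> V" "x = ?p v"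
        using im by (metis DiffD1 imageE)
      with x show "x \<in> ?p ` R"
        by (auto simp: R_def)
    qed
  qed
  have "f S = ?p ` nu R S" if S: "S \<in> F" for S
  proof -
    have SV: "S \<subseteq> V"
      using Xset_subset S .
    have "f S = nu (f V) (?p ` (V - S))"
      by (rule tar_aut_eq_nu_label_image[OF f S])
    also have "?p ` (V - S) = V - ?p ` S"
      using inj im SV by (simp add: inj_on_image_set_diff)
    also have "nu (f V) (V - ?p ` S) = nu (?p ` R) (?p ` S)"
      unfolding pR using fV SV im by (metis image_mono nu_Diff_Diff)
    also have "\<dots> = ?p ` nu R S"
      using inj SV R_V by (simp add: image_nu)
    finally show ?thesis .
  qed
  then show thesis
    using that bij R_V by blast
qed

context
  fixes f p R
  assumes f: "f \<in> tar_aut X G" and p: "bij_betw p V V" and R: "R \<subseteq> V"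
    and f_eq: "\<And>S. S \<in> F \<Longrightarrow> f S = p ` nu R S"
begin

lemma Xset_if_image_nu_Xset:
  assumes S: "S \<subseteq> V" and Xset: "p ` nu R S \<in> F"
  shows "S \<in> F"
proof -
  have "f ` F = F"
    using f by (simp add: tar_aut_def Bij_def bij_betw_def)
  then have "p ` nu R S \<in> f ` F"
    using Xset by simp
  then obtain S0 where S0: "S0 \<in> F" "f S0 = p ` nu R S"
    by (metis imageE)
  then have "p ` nu R S0 = p ` nu R S"
    using f_eq by simp
  moreover have "nu R S0 \<subseteq> V" "nu R S \<subseteq> V"
    using R S Xset_subset[OF S0(1)] by (auto simp: nu_def)
  ultimately have "nu R S0 = nu R S"
    using inj_on_image_eq_iff[OF bij_betw_imp_inj_on[OF p]] by blast
  with S0(1) show ?thesis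
    by (metis nu_nu_cancel(1))
qed

lemma irrelevant_if_tar_aut_eq_image_nu: "X_irrelevant X G R"
  unfolding X_irrelevant_def
proof (intro conjI ballI allI impI notI R)
  fix v M assume v: "v \<in> R" and M: "minimal_Xset X G M" and vM: "v \<in> M"
  then have MF: "M \<in> F"
    by (simp add: minimal_Xset_def)
  have "p ` nu R M \<subseteq> p ` nu R (M - {v})"
    using v vM by (auto simp: nu_def)
  moreover have "p ` nu R M \<in> F"
    using f_eq[OF MF] tar_aut_Xset[OF f MF] by simp
  moreover have "p ` nu R (M - {v}) \<subseteq> V"
    using p R Xset_subset[OF MF] by (auto simp: bij_betw_def nu_def)
  ultimately have "p ` nu R (M - {v}) \<in> F"
    using Xset_superset by blast
  then have "M - {v} \<in> F"
    using Xset_if_image_nu_Xset Xset_subset[OF MF] by blast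
  with M vM show False
    unfolding minimal_Xset_def by blast
qed

lemma image_Xset_iff_if_tar_aut_eq_image_nu:
  assumes S: "S \<subseteq> V"
  shows "p ` S \<in> F \<longleftrightarrow> S \<in> F"
proof -
  have "nu R S \<subseteq> V"
    using R S by (auto simp: nu_def)
  have "p ` S \<in> F \<longleftrightarrow> nu R S \<in> F"
  proof
    assume "p ` S \<in> F"
    then show "nu R S \<in> F"
      using Xset_if_image_nu_Xset[OF \<open>nu R S \<subseteq> V\<close>] by simp
  next
    assume "nu R S \<in> F"
    then show "p ` S \<in> F"
      using f_eq tar_aut_Xset[OF f] by (metis nu_nu_cancel(1))
  qed
  also have "\<dots> \<longleftrightarrow> S \<in> F"
    by (rule nu_irrelevant_Xset_iff[OF irrelevant_if_tar_aut_eq_image_nu])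
  finally show ?thesis .
qed

end

lemma tar_aut_in_generate:
  assumes f: "f \<in> tar_aut X G"
  shows "f \<in> generate (BijGroup F) (tar_generators X G)"
proof -
  obtain p R where p: "bij_betw p V V" and R: "R \<subseteq> V"
    and f_eq: "\<And>S. S \<in> F \<Longrightarrow> f S = p ` nu R S"
    using tar_aut_eq_image_nu[OF f] by blast
  note irr = irrelevant_if_tar_aut_eq_image_nu[OF f p R f_eq]
  note p_Xsets = image_Xset_iff_if_tar_aut_eq_image_nu[OF f p R f_eq]
  let ?gp = "restrict ((`) p) F" and ?gR = "restrict (nu R) F"
  have gens: "?gp \<in> tar_generators X G" "?gR \<in> tar_generators X G"
    using M_X_if_image_Xset_iff[OF p p_Xsets] irr unfolding tar_generators_def by blast+
  have "?gp \<in> Bij F" "?gR \<in> Bij F"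
    using image_in_tar_aut[OF p p_Xsets] nu_irrelevant_in_tar_aut[OF irr]
    by (auto simp: tar_aut_def)
  then have "?gp \<otimes>\<^bsub>BijGroup F\<^esub> ?gR = compose F ?gp ?gR"
    by (simp add: BijGroup_def)
  also have "\<dots> = f"
  proof (rule extensionalityI)
    show "compose F ?gp ?gR \<in> extensional F"
      by simp
    show "f \<in> extensional F"
      using f by (simp add: tar_aut_def Bij_def)
    fix S assume "S \<in> F"
    then show "compose F ?gp ?gR S = f S"
      using nu_irrelevant_Xset_iff[OF irr] f_eq by (simp add: compose_def)
  qed
  finally show ?thesis
    using gens by (auto intro: generate.eng generate.incl)
qed

theorem tar_aut_eq_generate: "tar_aut X G = generate (BijGroup F) (tar_generators X G)"
proof
  show "tar_aut X G \<subseteq> generate (BijGroup F) (tar_generators X G)"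
    using tar_aut_in_generate by blast
  show "generate (BijGroup F) (tar_generators X G) \<subseteq> tar_aut X G"
    by (rule group.generate_subgroup_incl[OF group_BijGroup tar_generators_subset tar_aut_subgroup])
qed

end

section \<open>Robust parameters\<close>

lemma super_X_param_subset: "super_X_param X \<Longrightarrow> is_graph H \<Longrightarrow> S \<in> X H \<Longrightarrow> S \<subseteq> verts H"
  unfolding super_X_param_def by (drule conjunct1) blast

lemma super_X_param_iso:
  "super_X_param X \<Longrightarrow> is_graph H \<Longrightarrow> is_graph H' \<Longrightarrow> graph_iso f H H' \<Longrightarrow> S \<in> X H \<Longrightarrow> f ` S \<in> X H'"
  unfolding super_X_param_def by (drule conjunct2, drule conjunct1) blast

lemma super_X_param_nonempty: "super_X_param X \<Longrightarrow> is_graph H \<Longrightarrow> X H \<noteq> {}"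
  unfolding super_X_param_def by (drule conjunct2, drule conjunct2, drule conjunct1) blast

lemma super_X_param_superset:
  "super_X_param X \<Longrightarrow> is_graph H \<Longrightarrow> S \<in> X H \<Longrightarrow> S \<subseteq> T \<Longrightarrow> T \<subseteq> verts H \<Longrightarrow> T \<in> X H"
  unfolding super_X_param_def by (drule conjunct2, drule conjunct2, drule conjunct2) blast

lemma super_X_param_verts:
  assumes "super_X_param X" "is_graph H"
  shows "verts H \<in> X H"
proof -
  obtain S where "S \<in> X H"
    using super_X_param_nonempty[OF assms] by blast
  then show ?thesis
    using super_X_param_subset[OF assms] super_X_param_superset[OF assms] by blast
qed

lemma robust_X_param_super: "robust_X_param X \<Longrightarrow> super_X_param X"
  unfolding robust_X_param_def by (rule conjunct1)

lemma robust_X_param_co_vertex: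
  "robust_X_param X \<Longrightarrow> is_graph H \<Longrightarrow> connected_graph H \<Longrightarrow> 2 \<le> card (verts H) \<Longrightarrow>
    S \<subseteq> verts H \<Longrightarrow> card S = card (verts H) - 1 \<Longrightarrow> S \<in> X H"
  unfolding robust_X_param_def by (drule conjunct2, drule conjunct1) blast

lemma robust_X_param_components:
  "robust_X_param X \<Longrightarrow> is_graph H \<Longrightarrow> S \<subseteq> verts H \<Longrightarrow>
    S \<in> X H \<longleftrightarrow> (\<forall>C\<in>components H. S \<inter> C \<in> X (induced H C))"
  unfolding robust_X_param_def by (drule conjunct2, drule conjunct2) blast

lemma is_graph_K1: "is_graph K1"
  by (simp add: is_graph_def K1_def verts_def edges_def)

lemma empty_Xset_K1:
  assumes X: "super_X_param X" and X0: "Xnum X K1 = 0"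
  shows "{} \<in> X K1"
proof -
  note K1 = is_graph_K1
  have "X K1 \<subseteq> Pow {0}"
    using super_X_param_subset[OF X K1] by (auto simp: K1_def verts_def)
  then have "finite (X K1)"
    by (rule finite_subset) simp
  then have "Xnum X K1 \<in> card ` X K1"
    unfolding Xnum_def using super_X_param_nonempty[OF X K1] by (intro Min_in) simp_all
  then have "0 \<in> card ` X K1"
    using X0 by simp
  then obtain S where "S \<in> X K1" "card S = 0"
    by (metis imageE)
  moreover have "finite S"
    using \<open>S \<in> X K1\<close> \<open>X K1 \<subseteq> Pow {0}\<close> finite_subset by blast
  ultimately show ?thesis
    by simp
qed

lemma adj_rel_sym: "sym (adj_rel G)"
  unfolding adj_rel_def sym_def by (simp add: insert_commute)

lemma rtrancl_adj_rel_in_verts: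
  assumes G: "is_graph G" and "(x, y) \<in> (adj_rel G)\<^sup>*" and "x \<in> verts G"
  shows "y \<in> verts G"
  using assms(2,3)
proof (induction rule: rtrancl_induct)
  case (step y z)
  then have "{y, z} \<in> edges G"
    by (simp add: adj_rel_def)
  with G show ?case
    unfolding is_graph_def by blast
qed

lemma component_of_subset_verts: "is_graph G \<Longrightarrow> w \<in> verts G \<Longrightarrow> component_of G w \<subseteq> verts G"
  unfolding component_of_def using rtrancl_adj_rel_in_verts by blast

lemma component_of_eq:
  assumes "v \<in> component_of G w"
  shows "component_of G w = component_of G v"
proof -
  have "(w, v) \<in> (adj_rel G)\<^sup>*" "(v, w) \<in> (adj_rel G)\<^sup>*"
    using assms sym_rtrancl[OF adj_rel_sym] by (auto simp: component_of_def sym_def)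
  then show ?thesis
    unfolding component_of_def by (meson rtrancl_trans)
qed

lemma is_graph_induced: "is_graph G \<Longrightarrow> C \<subseteq> verts G \<Longrightarrow> C \<noteq> {} \<Longrightarrow> is_graph (induced G C)"
  using finite_subset unfolding is_graph_def induced_def verts_def edges_def by auto

lemma connected_induced_component: "connected_graph (induced G (component_of G v))"
proof -
  let ?C = "component_of G v"
  let ?r = "adj_rel (induced G ?C)"
  have from_v: "(v, x) \<in> ?r\<^sup>*" if "(v, x) \<in> (adj_rel G)\<^sup>*" for x
    using that
  proof (induction rule: rtrancl_induct)
    case (step y z)
    then have "y \<in> ?C" "z \<in> ?C" "{y, z} \<in> edges G"
      using rtrancl_into_rtrancl[OF step.hyps] by (simp_all add: component_of_def adj_rel_def)
    then have "(y, z) \<in> ?r"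
      by (simp add: adj_rel_def induced_def edges_def)
    with step.IH show ?case
      by (rule rtrancl_into_rtrancl)
  qed simp
  show ?thesis
    unfolding connected_graph_def
  proof (intro ballI)
    fix x y assume "x \<in> verts (induced G ?C)" "y \<in> verts (induced G ?C)"
    then have "(v, x) \<in> ?r\<^sup>*" "(v, y) \<in> ?r\<^sup>*"
      using from_v by (auto simp: induced_def verts_def component_of_def)
    then show "(x, y) \<in> ?r\<^sup>*"
      using sym_rtrancl[OF adj_rel_sym] unfolding sym_def by (meson rtrancl_trans)
  qed
qed

lemma isolated_if_component_singleton:
  assumes G: "is_graph G" and v: "v \<in> verts G" and C: "component_of G v = {v}"
  shows "isolated G v"
  unfolding isolated_def
proof (intro conjI ballI notI v)
  fix e assume e: "e \<in> edges G" and "v \<in> e"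
  have "card e = 2"
    using G e by (simp add: is_graph_def)
  then obtain a b where ab: "e = {a, b}" "a \<noteq> b"
    unfolding card_2_iff by blast
  define u where "u = (if v = a then b else a)"
  have "e = {v, u}" "u \<noteq> v"
    using ab \<open>v \<in> e\<close> by (auto simp: u_def)
  with e have "u \<in> component_of G v"
    by (auto simp: component_of_def adj_rel_def)
  with C \<open>u \<noteq> v\<close> show False
    by simp
qed

lemma graph_iso_K1:
  assumes "is_graph G"
  shows "graph_iso (\<lambda>_. v) K1 (induced G {v})"
proof -
  have "{v} \<notin> edges G"
    using assms by (auto simp: is_graph_def)
  then show ?thesis
    by (simp add: graph_iso_def K1_def induced_def verts_def edges_def bij_betw_def)
qed

lemma empty_Xset_induced_singleton:
  assumes X: "super_X_param X" and G: "is_graph G" and v: "v \<in> verts G" and K1: "{} \<in> X K1"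
  shows "{} \<in> X (induced G {v})"
proof -
  have "is_graph (induced G {v})"
    using is_graph_induced[OF G] v by simp
  then have "(\<lambda>_::nat. v) ` {} \<in> X (induced G {v})"
    using super_X_param_iso[OF X is_graph_K1 _ graph_iso_K1[OF G] K1] by blast
  then show ?thesis
    by simp
qed

lemma robust_X_param_component_minus_vertex:
  assumes X: "robust_X_param X" and G: "is_graph G" and v: "v \<in> verts G"
    and card: "2 \<le> card (component_of G v)"
  shows "component_of G v - {v} \<in> X (induced G (component_of G v))"
proof -
  let ?C = "component_of G v"
  have CV: "?C \<subseteq> verts G"
    using component_of_subset_verts[OF G v] .
  have "v \<in> ?C"
    by (simp add: component_of_def)
  then have "is_graph (induced G ?C)"
    using is_graph_induced[OF G CV] by blast
  moreover have "finite ?C"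
    using CV G finite_subset by (auto simp: is_graph_def)
  ultimately show ?thesis
    using robust_X_param_co_vertex[OF X _ connected_induced_component] card \<open>v \<in> ?C\<close>
    by (simp add: induced_def verts_def)
qed

text \<open>The hypothesis on isolated vertices is needed exactly for components consisting of the
  removed vertex alone: then the trace of the set on the component is empty.\<close>
lemma robust_X_param_cosingleton_Xset:
  assumes X: "robust_X_param X" and G: "is_graph G"
    and isolated: "Xnum X K1 = 0 \<or> (\<forall>v\<in>verts G. \<not> isolated G v)" and v: "v \<in> verts G"
  shows "verts G - {v} \<in> X G"
proof -
  have sup: "super_X_param X"
    using X by (rule robust_X_param_super)
  have "(verts G - {v}) \<inter> C \<in> X (induced G C)" if "C \<in> components G" for C
  proof -
    obtain w where w: "w \<in> verts G" "C = component_of G w"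
      using \<open>C \<in> components G\<close> unfolding components_def by blast
    have CV: "C \<subseteq> verts G"
      using component_of_subset_verts[OF G w(1)] w(2) by simp
    show ?thesis
    proof (cases "v \<in> C")
      case False
      have "w \<in> C"
        using w(2) by (simp add: component_of_def)
      then have "verts (induced G C) \<in> X (induced G C)"
        using super_X_param_verts[OF sup is_graph_induced[OF G CV]] by blast
      moreover have "(verts G - {v}) \<inter> C = verts (induced G C)"
        using False CV by (auto simp: induced_def verts_def)
      ultimately show ?thesis
        by simp
    next
      case True
      then have C: "C = component_of G v"
        using component_of_eq w(2) by simp
      have "finite C"
        using CV G finite_subset by (auto simp: is_graph_def)
      show ?thesis
      proof (cases "2 \<le> card C")
        case True
        moreover have "(verts G - {v}) \<inter> C = C - {v}"
          using CV by blast
        ultimately show ?thesis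
          using robust_X_param_component_minus_vertex[OF X G v] C by simp
      next
        case False
        then have "C = {v}"
          using card_le_Suc0_iff_eq[OF \<open>finite C\<close>] \<open>v \<in> C\<close> by fastforce
        then have "{} \<in> X K1"
          using isolated_if_component_singleton[OF G v] C isolated v empty_Xset_K1[OF sup] by auto
        then show ?thesis
          using empty_Xset_induced_singleton[OF sup G v] \<open>C = {v}\<close> by simp
      qed
    qed
  qed
  then show ?thesis
    using robust_X_param_components[OF X G] by blast
qed

theorem theorem2p27:
  fixes X :: "graph \<Rightarrow> nat set set" and G :: graph
  assumes "robust_X_param X"
    and "is_graph G"
    and "Xnum X K1 = 0 \<or> (\<forall>v\<in>verts G. \<not> isolated G v)"
  shows "tar_aut X G = generate (BijGroup (X G)) (tar_generators X G)"
proof -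
  have sup: "super_X_param X"
    using assms(1) by (rule robust_X_param_super)
  interpret cosingleton_closed_Xsets X G
  proof
    show "finite (verts G)"
      using assms(2) by (simp add: is_graph_def)
    show "S \<subseteq> verts G" if "S \<in> X G" for S
      using super_X_param_subset[OF sup assms(2) that] .
    show "T \<in> X G" if "S \<in> X G" "S \<subseteq> T" "T \<subseteq> verts G" for S T
      using super_X_param_superset[OF sup assms(2) that] .
    show "verts G - {v} \<in> X G" if "v \<in> verts G" for v
      using robust_X_param_cosingleton_Xset[OF assms that] .
    show "X G \<noteq> {}"
      using super_X_param_nonempty[OF sup assms(2)] .
  qed
  show ?thesis
    by (rule tar_aut_eq_generate)
qed

end
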